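(* Let $k_1,\dots,k_r$ be pairwise coprime odd integers with $k_i\ge 3$ for all $i$, such that $q=2k_1k_2\cdots k_r+1$ is a prime power. Then there exists a $\left(\frac{q-1}{2},\{k_1,\dots,k_r\}\right)$-MOHS.
   Context: Let $G$ be an abelian group of odd order $2v+1\ge 7$. A half-set of $G$ is a subset $V\subseteq G\setminus\{0\}$ containing exactly one element of each pair $\{g,-g\}$, $g\ne 0$ (so $|V|=v$). A $(v,k)$ Heffter system on $V$ is a partition of $V$ into blocks of size $k$, each block having sum $0$ in $G$. Two Heffter systems on the same half-set are orthogonal if every block of one meets every block of the other in at most one element. A $(v,\{k_1,\dots,k_r\})$-MOHS is a set $\{\mathcal P_1,\dots,\mathcal P_r\}$ of pairwise orthogonal Heffter systems on a common half-set of some abelian group of order $2v+1$, where $\mathcal P_i$ is a $(v,k_i)$ Heffter system. *)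

theory Defs
  imports "HOL-Algebra.Algebra" "HOL-Computational_Algebra.Primes"
begin

text \<open>Abelian groups are HOL-Algebra commutative groups, written multiplicatively:
  the group operation plays the role of +, \<one> of 0, inv of negation.\<close>

definition half_set :: "('a, 'b) monoid_scheme \<Rightarrow> 'a set \<Rightarrow> bool" where
  "half_set G V \<longleftrightarrow> V \<subseteq> carrier G - {\<one>\<^bsub>G\<^esub>} \<and>
     (\<forall>g \<in> carrier G - {\<one>\<^bsub>G\<^esub>}. (g \<in> V \<longleftrightarrow> inv\<^bsub>G\<^esub> g \<notin> V))"

definition heffter_system :: "('a, 'b) monoid_scheme \<Rightarrow> 'a set \<Rightarrow> nat \<Rightarrow> 'a set set \<Rightarrow> bool" where
  "heffter_system G V k P \<longleftrightarrow>
     \<Union>P = V \<and>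
     (\<forall>B \<in> P. B \<noteq> {} \<and> card B = k \<and> finprod G (\<lambda>x. x) B = \<one>\<^bsub>G\<^esub>) \<and>
     (\<forall>A \<in> P. \<forall>B \<in> P. A \<noteq> B \<longrightarrow> A \<inter> B = {})"

definition orthogonal_systems :: "'a set set \<Rightarrow> 'a set set \<Rightarrow> bool" where
  "orthogonal_systems P Q \<longleftrightarrow> (\<forall>A \<in> P. \<forall>B \<in> Q. card (A \<inter> B) \<le> 1)"

text \<open>A (v, {k_1,...,k_r})-MOHS: pairwise orthogonal Heffter systems P_i (i < r),
  P_i a (v,k_i) Heffter system, on a common half-set of an abelian group of order 2v+1.
  Groups are taken with carrier of type nat, which is no loss since every finite group
  is isomorphic to one on natural numbers.\<close>

definition exists_MOHS :: "nat \<Rightarrow> nat list \<Rightarrow> bool" where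
  "exists_MOHS v ks \<longleftrightarrow>
     (\<exists>(G :: nat monoid) V Ps.
        comm_group G \<and> finite (carrier G) \<and> order G = 2 * v + 1 \<and>
        half_set G V \<and> length Ps = length ks \<and>
        (\<forall>i < length ks. heffter_system G V (ks ! i) (Ps ! i)) \<and>
        (\<forall>i < length ks. \<forall>j < length ks. i \<noteq> j \<longrightarrow> orthogonal_systems (Ps ! i) (Ps ! j)))"

end

(*
  Let K = k_1 ... k_r, so that q = 2K + 1 = p^e. In an algebraic closure of Z/p the fixed
  points of x |-> x^q form a field F with q elements (the Frobenius map is additive), and
  F - {0} is the group of (2K)-th roots of unity. As K is odd, every nonzero g satisfies
  g^K = 1 or g^K = -1, and (-g)^K = -(g^K); hence the K-th roots of unity form a half-set of
  the additive group of F. For k dividing K, the cosets x mu_k of the k-th roots of unity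
  inside mu_K partition mu_K into blocks of size k, and each block sums to x (sum of mu_k) = 0.
  For coprime k and k', the relations z^k = w^k and z^k' = w^k' force z = w by Bezout, so a
  coset of mu_k and a coset of mu_k' share at most one element. Finally the additive group of
  F is transported to an isomorphic group on the natural numbers.
*)

theory Submission
  imports Defs "HOL-Number_Theory.Residues"
begin

section \<open>Binomial theorem and the Frobenius map\<close>

lemma (in cring) binomial_expansion:
  assumes x: "x \<in> carrier R" and y: "y \<in> carrier R"
  shows "(x \<oplus> y) [^] n = (\<Oplus>k\<in>{..n}. add_pow R (n choose k) (x [^] k \<otimes> y [^] (n - k)))"
proof (induction n)
  case 0
  then show ?case using x y by simp
next
  case (Suc n)
  define S where "S = (\<Oplus>k\<in>{..n}. add_pow R (n choose k) (x [^] k \<otimes> y [^] (n - k)))"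
  \<comment> \<open>y S and x S, reindexed as sums over {..Suc n} so that Pascal's rule applies termwise\<close>
  define a where "a k = add_pow R (n choose k) (x [^] k \<otimes> y [^] (Suc n - k))" for k
  define b where "b k = add_pow R (if k = 0 then 0 else n choose (k - 1)) (x [^] k \<otimes> y [^] (Suc n - k))" for k
  have a_closed: "a \<in> A \<rightarrow> carrier R" and b_closed: "b \<in> A \<rightarrow> carrier R" for A
    unfolding a_def b_def using x y by auto
  have "x \<otimes> S = (\<Oplus>k\<in>{..n}. x \<otimes> add_pow R (n choose k) (x [^] k \<otimes> y [^] (n - k)))"
    unfolding S_def using x y by (simp add: finsum_rdistr)
  also have "\<dots> = (\<Oplus>k\<in>{..n}. b (Suc k))"
  proof (rule finsum_cong')
    show "x \<otimes> add_pow R (n choose k) (x [^] k \<otimes> y [^] (n - k)) = b (Suc k)" for k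
      unfolding b_def using x y by (simp add: add_pow_rdistr m_assoc[symmetric] nat_pow_Suc2 m_comm[of x])
  qed (use b_closed x y in auto)
  also have "\<dots> = (\<Oplus>k\<in>{..Suc n}. b k)"
  proof -
    have "(\<lambda>k. b (Suc k)) \<in> {..n} \<rightarrow> carrier R" using b_closed by auto
    then show ?thesis using finsum_Suc2[OF b_closed, of n] by (simp add: b_def[of 0] finsum_closed)
  qed
  finally have xS: "x \<otimes> S = (\<Oplus>k\<in>{..Suc n}. b k)" .
  have "y \<otimes> S = (\<Oplus>k\<in>{..n}. y \<otimes> add_pow R (n choose k) (x [^] k \<otimes> y [^] (n - k)))"
    unfolding S_def using x y by (simp add: finsum_rdistr)
  also have "\<dots> = (\<Oplus>k\<in>{..n}. a k)"
  proof (rule finsum_cong')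
    show "y \<otimes> add_pow R (n choose k) (x [^] k \<otimes> y [^] (n - k)) = a k" if "k \<in> {..n}" for k
      unfolding a_def using x y that by (simp add: add_pow_rdistr Suc_diff_le nat_pow_Suc2 m_ac)
  qed (use a_closed x y in auto)
  also have "\<dots> = (\<Oplus>k\<in>{..Suc n}. a k)"
    using finsum_Suc[OF a_closed, of n] finsum_closed[OF a_closed] by (simp add: a_def[of "Suc n"] binomial_eq_0)
  finally have yS: "y \<otimes> S = (\<Oplus>k\<in>{..Suc n}. a k)" .
  have pascal: "b k \<oplus> a k = add_pow R (Suc n choose k) (x [^] k \<otimes> y [^] (Suc n - k))" for k
    unfolding a_def b_def using x y by (cases k) (simp_all add: add.nat_pow_mult)
  have "(x \<oplus> y) [^] Suc n = x \<otimes> S \<oplus> y \<otimes> S"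
    using Suc x y by (simp add: S_def l_distr m_comm finsum_closed)
  also have "\<dots> = (\<Oplus>k\<in>{..Suc n}. b k \<oplus> a k)"
    unfolding xS yS using a_closed b_closed by (simp add: finsum_addf)
  finally show ?case by (simp add: pascal)
qed

lemma (in ring) add_pow_one_eq_zero_dvd:
  fixes m n :: nat
  assumes "add_pow R m \<one> = \<zero>" and "m dvd n"
  shows "add_pow R n \<one> = \<zero>"
proof -
  obtain k where "n = m * k" using assms(2) by (auto elim: dvdE)
  then have "add_pow R n \<one> = add_pow R k (add_pow R m \<one>)"
    using add.nat_pow_pow[of \<one> m k] add.nat_pow_pow[of \<one> k m] by (simp add: add_pow_def mult.commute)
  then show ?thesis
    using assms(1) add.nat_pow_one[of k] by (simp add: add_pow_def)
qed

lemma (in ring) add_pow_one_eq_neg_one: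
  assumes "add_pow R (Suc n) \<one> = \<zero>"
  shows "add_pow R n \<one> = \<ominus> \<one>"
  using assms by (simp add: add.nat_pow_Suc minus_equality)

lemma (in domain) add_pow_one_ne_zero_dvd_pred:
  assumes char: "add_pow R (Suc n) \<one> = \<zero>" and d: "d dvd n"
  shows "add_pow R d \<one> \<noteq> \<zero>"
proof
  assume "add_pow R d \<one> = \<zero>"
  then have "add_pow R n \<one> = \<zero>"
    using d by (rule add_pow_one_eq_zero_dvd)
  then have "\<ominus> \<one> = \<zero>"
    using add_pow_one_eq_neg_one[OF char] by simp
  then show False
    using minus_minus[OF one_closed] by simp
qed

lemma (in cring) frobenius_add:
  assumes x: "x \<in> carrier R" and y: "y \<in> carrier R"
    and p: "Factorial_Ring.prime (p::nat)" and char: "add_pow R p \<one> = \<zero>"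
  shows "(x \<oplus> y) [^] p = x [^] p \<oplus> y [^] p"
proof -
  define f where "f k = add_pow R (p choose k) (x [^] k \<otimes> y [^] (p - k))" for k
  have f_closed: "f k \<in> carrier R" for k
    unfolding f_def using x y by auto
  have "f k = \<zero>" if "0 < k" "k < p" for k
  proof -
    have "p dvd (p choose k)"
      using dvd_choose_prime[of k p] that p by simp
    then have "add_pow R (p choose k) \<one> = \<zero>"
      by (rule add_pow_one_eq_zero_dvd[OF char])
    then show ?thesis
      unfolding f_def using add_pow_ldistr[of \<one> "x [^] k \<otimes> y [^] (p - k)" "p choose k"] x y by simp
  qed
  then have "(\<Oplus>k\<in>{0<..<p}. f k) = (\<Oplus>k\<in>{0<..<p}. \<zero>)"
    by (intro finsum_cong') auto
  then have middle: "(\<Oplus>k\<in>{0<..<p}. f k) = \<zero>"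
    by simp
  have p0: "0 < p"
    using prime_gt_0_nat[OF p] .
  then have "{..p} = insert p (insert 0 {0<..<p})"
    by auto
  then have "(x \<oplus> y) [^] p = f p \<oplus> (f 0 \<oplus> (\<Oplus>k\<in>{0<..<p}. f k))"
    using binomial_expansion[OF x y, of p] f_closed p0
    by (simp add: f_def[symmetric] finsum_insert Pi_def)
  then show ?thesis
    using middle x y p0 by (simp add: f_def)
qed

lemma (in cring) frobenius_add_power:
  assumes x: "x \<in> carrier R" and y: "y \<in> carrier R"
    and p: "Factorial_Ring.prime (p::nat)" and char: "add_pow R p \<one> = \<zero>"
  shows "(x \<oplus> y) [^] (p ^ n) = x [^] (p ^ n) \<oplus> y [^] (p ^ n)"
proof (induction n)
  case (Suc n)
  have "(x \<oplus> y) [^] (p ^ Suc n) = ((x \<oplus> y) [^] (p ^ n)) [^] p"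
    using x y by (simp add: nat_pow_pow mult.commute)
  also have "\<dots> = (x [^] (p ^ n)) [^] p \<oplus> (y [^] (p ^ n)) [^] p"
    using Suc x y p char by (simp add: frobenius_add)
  also have "\<dots> = x [^] (p ^ Suc n) \<oplus> y [^] (p ^ Suc n)"
    using x y by (simp add: nat_pow_pow mult.commute)
  finally show ?case .
qed (use x y in simp)

lemma (in cring) frobenius_fixed_points_subgroup:
  assumes p: "Factorial_Ring.prime (p::nat)" and char: "add_pow R p \<one> = \<zero>"
  shows "subgroup {x \<in> carrier R. x [^] (p ^ e) = x} (add_monoid R)"
proof -
  let ?F = "{x \<in> carrier R. x [^] (p ^ e) = x}"
  have q0: "p ^ e \<noteq> 0"
    using p by (simp add: prime_gt_0_nat)
  have zero: "\<zero> \<in> ?F"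
    using nat_pow_zero[OF q0] by simp
  have add: "x \<oplus> y \<in> ?F" if "x \<in> ?F" "y \<in> ?F" for x y
    using that frobenius_add_power[OF _ _ p char] by auto
  \<comment> \<open>Additivity applied to x and -x, which also covers p = 2\<close>
  have neg: "\<ominus> x \<in> ?F" if x: "x \<in> ?F" for x
  proof -
    have "x [^] (p ^ e) \<oplus> (\<ominus> x) [^] (p ^ e) = (x \<oplus> \<ominus> x) [^] (p ^ e)"
      using x frobenius_add_power[OF _ _ p char, of x "\<ominus> x"] by simp
    also have "\<dots> = \<zero>"
      using x q0 by (simp add: r_neg nat_pow_zero)
    finally have "(\<ominus> x) [^] (p ^ e) = \<ominus> x"
      using x by (simp add: sum_zero_eq_neg a_comm)
    then show ?thesis
      using x by simp
  qed
  show ?thesis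
    using zero add neg by (intro add.subgroupI) (auto simp: a_inv_def[symmetric])
qed

lemma (in ring) neg_pow_odd:
  assumes "x \<in> carrier R" and "odd (n::nat)"
  shows "(\<ominus> x) [^] n = \<ominus> (x [^] n)"
proof -
  have "(\<ominus> x) [^] m = (if even m then x [^] m else \<ominus> (x [^] m))" for m :: nat
    using assms(1) by (induction m) (auto simp: l_minus r_minus)
  then show ?thesis using assms(2) by simp
qed

section \<open>Roots of unity\<close>

definition roots_of_unity :: "('a, 'b) monoid_scheme \<Rightarrow> nat \<Rightarrow> 'a set" where
  "roots_of_unity R N = {x \<in> carrier R. x [^]\<^bsub>R\<^esub> N = \<one>\<^bsub>R\<^esub>}"

lemma roots_of_unity_subset: "roots_of_unity R N \<subseteq> carrier R"
  by (auto simp: roots_of_unity_def)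

lemma id_funcset_roots_of_unity: "(\<lambda>x. x) \<in> roots_of_unity R N \<rightarrow> carrier R"
  by (auto simp: roots_of_unity_def)

lemma (in monoid) roots_of_unity_subset_dvd:
  assumes "k dvd N"
  shows "roots_of_unity G k \<subseteq> roots_of_unity G N"
proof
  fix x assume x: "x \<in> roots_of_unity G k"
  obtain m where "N = k * m"
    using assms by (auto elim: dvdE)
  then show "x \<in> roots_of_unity G N"
    using x by (simp add: roots_of_unity_def nat_pow_pow[symmetric])
qed

lemma (in domain) zero_notin_roots_of_unity: "N > 0 \<Longrightarrow> \<zero> \<notin> roots_of_unity R N"
  by (auto simp: roots_of_unity_def nat_pow_zero)

lemma (in domain) pow_nonzero: "a \<in> carrier R \<Longrightarrow> a \<noteq> \<zero> \<Longrightarrow> a [^] (n::nat) \<noteq> \<zero>"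
  by (induction n) (auto simp: integral_iff)

lemma (in domain) inj_on_mult_left:
  assumes "a \<in> carrier R" and "a \<noteq> \<zero>"
  shows "inj_on ((\<otimes>) a) (carrier R)"
  using m_lcancel[OF assms(2,1)] by (auto simp: inj_on_def)

lemma (in domain) pow_Suc_fixed_points_eq:
  "{x \<in> carrier R. x [^] Suc N = x} = insert \<zero> (roots_of_unity R N)"
proof (intro Set.set_eqI iffI)
  fix x assume "x \<in> {x \<in> carrier R. x [^] Suc N = x}"
  then have x: "x \<in> carrier R" and "x [^] N \<otimes> x = \<one> \<otimes> x"
    by auto
  then show "x \<in> insert \<zero> (roots_of_unity R N)"
    using m_rcancel[of x "x [^] N" \<one>] by (auto simp: roots_of_unity_def)
next
  fix x assume "x \<in> insert \<zero> (roots_of_unity R N)"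
  then show "x \<in> {x \<in> carrier R. x [^] Suc N = x}"
    by (auto simp: roots_of_unity_def nat_pow_zero)
qed

lemma (in domain) roots_of_unity_neg_iff:
  assumes K: "odd K" and two: "add_pow R (2::nat) \<one> \<noteq> \<zero>" and g2K: "g \<in> roots_of_unity R (2 * K)"
  shows "g \<in> roots_of_unity R K \<longleftrightarrow> \<ominus> g \<notin> roots_of_unity R K"
proof -
  have g: "g \<in> carrier R" and "g [^] (2 * K) = \<one>"
    using g2K by (auto simp: roots_of_unity_def)
  have one_neq: "\<one> \<noteq> \<ominus> \<one>"
    using two r_neg[OF one_closed] by (auto simp: numeral_2_eq_2)
  have "g [^] K \<otimes> g [^] K = \<one>"
    using g \<open>g [^] (2 * K) = \<one>\<close> by (simp add: nat_pow_mult mult_2)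
  then have "g [^] K = \<one> \<or> g [^] K = \<ominus> \<one>"
    using g by (intro square_eq_one) auto
  moreover have "(\<ominus> g) [^] K = \<ominus> (g [^] K)"
    using neg_pow_odd[OF g K] .
  ultimately show ?thesis
    using g one_neq by (auto simp: roots_of_unity_def)
qed

lemma (in domain) sum_roots_of_unity_eq_zero:
  assumes N: "N > 0" and fin: "finite (roots_of_unity R N)" and card: "2 \<le> card (roots_of_unity R N)"
  shows "(\<Oplus>x\<in>roots_of_unity R N. x) = \<zero>"
proof -
  let ?U = "roots_of_unity R N"
  let ?S = "\<Oplus>x\<in>?U. x"
  obtain \<zeta> where \<zeta>: "\<zeta> \<in> ?U" "\<zeta> \<noteq> \<one>"
    using card card_mono[of "{\<one>}" ?U] by fastforce
  have \<zeta>_closed: "\<zeta> \<in> carrier R" and \<zeta>0: "\<zeta> \<noteq> \<zero>"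
    using \<zeta>(1) zero_notin_roots_of_unity[OF N] by (auto simp: roots_of_unity_def)
  have U: "?U \<subseteq> carrier R"
    by (rule roots_of_unity_subset)
  have inj: "inj_on ((\<otimes>) \<zeta>) ?U"
    using inj_on_subset[OF inj_on_mult_left[OF \<zeta>_closed \<zeta>0] U] .
  have "(\<otimes>) \<zeta> ` ?U \<subseteq> ?U"
    using \<zeta> by (auto simp: roots_of_unity_def nat_pow_distrib)
  then have perm: "(\<otimes>) \<zeta> ` ?U = ?U"
    using card_image[OF inj] fin by (intro card_subset_eq) auto
  have S: "?S \<in> carrier R"
    using U by (intro finsum_closed) auto
  have "?S = (\<Oplus>x\<in>(\<otimes>) \<zeta> ` ?U. x)"
    by (simp only: perm)
  also have "\<dots> = (\<Oplus>x\<in>?U. \<zeta> \<otimes> x)"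
    using inj U \<zeta>_closed by (subst finsum_reindex) auto
  also have "\<dots> = \<zeta> \<otimes> ?S"
    using finsum_rdistr[OF fin \<zeta>_closed id_funcset_roots_of_unity] by simp
  finally have "\<one> \<otimes> ?S = \<zeta> \<otimes> ?S"
    using S by simp
  then show ?thesis
    using m_rcancel[OF _ S] \<zeta> \<zeta>_closed by auto
qed

section \<open>Counting roots of unity in an algebraically closed field\<close>

primrec geometric_sum :: "('a, 'b) ring_scheme \<Rightarrow> 'a \<Rightarrow> 'a \<Rightarrow> nat \<Rightarrow> 'a" where
  "geometric_sum R x c 0 = \<zero>\<^bsub>R\<^esub>"
| "geometric_sum R x c (Suc n) = x \<otimes>\<^bsub>R\<^esub> geometric_sum R x c n \<oplus>\<^bsub>R\<^esub> c [^]\<^bsub>R\<^esub> n"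

lemma (in cring) geometric_sum_closed:
  "x \<in> carrier R \<Longrightarrow> c \<in> carrier R \<Longrightarrow> geometric_sum R x c n \<in> carrier R"
  by (induction n) auto

lemma (in cring) pow_diff_eq_mult_geometric_sum:
  assumes x: "x \<in> carrier R" and c: "c \<in> carrier R"
  shows "x [^] n \<ominus> c [^] n = (x \<ominus> c) \<otimes> geometric_sum R x c n"
proof (induction n)
  case 0
  then show ?case using x c by (simp add: r_neg)
next
  case (Suc n)
  have g: "geometric_sum R x c n \<in> carrier R"
    using geometric_sum_closed x c .
  have xn: "x [^] n \<in> carrier R" and cn: "c [^] n \<in> carrier R"
    using x c by auto
  have "(x \<ominus> c) \<otimes> geometric_sum R x c (Suc n)
      = x \<otimes> ((x \<ominus> c) \<otimes> geometric_sum R x c n) \<oplus> (x \<ominus> c) \<otimes> c [^] n"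
    unfolding geometric_sum.simps using x c g cn by algebra
  also have "\<dots> = x \<otimes> (x [^] n \<ominus> c [^] n) \<oplus> (x \<ominus> c) \<otimes> c [^] n"
    by (simp only: Suc)
  also have "\<dots> = x [^] n \<otimes> x \<ominus> c [^] n \<otimes> c"
    using x c xn cn by algebra
  finally show ?case by simp
qed

lemma (in cring) geometric_sum_diagonal:
  assumes a: "a \<in> carrier R"
  shows "geometric_sum R a a (Suc n) = add_pow R (Suc n) (a [^] n)"
proof (induction n)
  case (Suc n)
  have "geometric_sum R a a (Suc (Suc n)) = a \<otimes> add_pow R (Suc n) (a [^] n) \<oplus> a [^] Suc n"
    using Suc by simp
  also have "a \<otimes> add_pow R (Suc n) (a [^] n) = add_pow R (Suc n) (a \<otimes> a [^] n)"
    using a by (intro add_pow_rdistr) simp_all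
  also have "a \<otimes> a [^] n = a [^] Suc n"
    using a by (simp add: m_comm)
  finally show ?case
    using a by (simp add: add.nat_pow_Suc)
qed (use a in simp)

lemma (in ring_hom_cring) hom_geometric_sum:
  assumes "x \<in> carrier R" "c \<in> carrier R"
  shows "h (geometric_sum R x c n) = geometric_sum S (h x) (h c) n"
  using assms by (induction n) (auto simp: R.geometric_sum_closed)

definition unity_poly :: "('a, 'b) ring_scheme \<Rightarrow> nat \<Rightarrow> 'a list" where
  "unity_poly R N = X\<^bsub>R\<^esub> [^]\<^bsub>poly_ring R\<^esub> N \<ominus>\<^bsub>poly_ring R\<^esub> \<one>\<^bsub>poly_ring R\<^esub>"

lemma (in domain) const_poly_pow:
  assumes "a \<in> carrier R" "a \<noteq> \<zero>"
  shows "[a] [^]\<^bsub>poly_ring R\<^esub> (n::nat) = [a [^] n]"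
proof (induction n)
  case 0
  then show ?case by (simp add: univ_poly_one)
next
  case (Suc n)
  have "a [^] n \<noteq> \<zero>"
    using pow_nonzero assms .
  then have "[a [^] n] \<otimes>\<^bsub>poly_ring R\<^esub> [a] = [a [^] n \<otimes> a]"
    using assms poly_mult_const'(1)[of "[a]" "a [^] n"] integral_iff
    by (simp add: univ_poly_mult m_comm)
  then show ?case
    using Suc by simp
qed

lemma (in domain) unity_poly_closed: "unity_poly R N \<in> carrier (poly_ring R)"
proof -
  interpret P: domain "poly_ring R"
    using univ_poly_is_domain[OF carrier_is_subring] .
  show ?thesis
    unfolding unity_poly_def using var_closed(1)[OF carrier_is_subring] by simp
qed

lemma (in domain) eval_unity_poly:
  assumes x: "x \<in> carrier R"
  shows "eval (unity_poly R N) x = x [^] N \<ominus> \<one>"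
proof -
  interpret h: ring_hom_cring "poly_ring R" R "\<lambda>p. eval p x"
    using eval_cring_hom[OF carrier_is_subring x] .
  show ?thesis
    unfolding unity_poly_def using var_closed(1)[OF carrier_is_subring] x eval_var[OF x]
    by (simp add: a_minus_def)
qed

lemma (in domain) degree_unity_poly:
  assumes "N > 0"
  shows "degree (unity_poly R N) = N"
proof -
  interpret P: domain "poly_ring R"
    using univ_poly_is_domain[OF carrier_is_subring] .
  have "X [^]\<^bsub>poly_ring R\<^esub> N = \<one> # replicate N \<zero>"
    using unitary_monom_eq_var_pow[OF carrier_is_subring, of N] by (simp add: monom_def)
  moreover have "\<ominus>\<^bsub>poly_ring R\<^esub> \<one>\<^bsub>poly_ring R\<^esub> = [\<ominus> \<one>]"
    using univ_poly_a_inv_def'[OF carrier_is_subring P.one_closed] by (simp add: univ_poly_one)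
  ultimately have "unity_poly R N = poly_add (\<one> # replicate N \<zero>) [\<ominus> \<one>]"
    unfolding unity_poly_def a_minus_def by (simp add: univ_poly_add)
  also have "degree \<dots> = max (degree (\<one> # replicate N \<zero>)) (degree [\<ominus> \<one>])"
    by (rule poly_add_degree_eq[OF carrier_is_subring]) (use assms in \<open>auto simp: polynomial_def\<close>)
  finally show ?thesis by simp
qed

lemma (in domain) unity_poly_factor:
  assumes a: "a \<in> carrier R" and aN: "a [^] N = \<one>" and N: "N > 0"
  shows "unity_poly R N = [\<one>, \<ominus> a] \<otimes>\<^bsub>poly_ring R\<^esub> geometric_sum (poly_ring R) X [a] N"
proof -
  interpret P: domain "poly_ring R"
    using univ_poly_is_domain[OF carrier_is_subring] .
  have X: "X \<in> carrier (poly_ring R)"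
    using var_closed(1)[OF carrier_is_subring] .
  have a0: "a \<noteq> \<zero>"
    using aN N by (cases N) auto
  have c: "[a] \<in> carrier (poly_ring R)"
    using a a0 by (simp add: univ_poly_carrier[symmetric] polynomial_def)
  have "\<ominus>\<^bsub>poly_ring R\<^esub> [a] = [\<ominus> a]"
    using univ_poly_a_inv_def'[OF carrier_is_subring c] by simp
  then have "[\<one>, \<ominus> a] = X \<ominus>\<^bsub>poly_ring R\<^esub> [a]"
    unfolding a_minus_def by (simp add: univ_poly_add var_def a)
  moreover have "[a] [^]\<^bsub>poly_ring R\<^esub> N = \<one>\<^bsub>poly_ring R\<^esub>"
    using const_poly_pow[OF a a0] aN by (simp add: univ_poly_one)
  ultimately show ?thesis
    unfolding unity_poly_def using P.pow_diff_eq_mult_geometric_sum[OF X c, of N] by simp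
qed

lemma (in domain) eval_geometric_sum_var_const:
  assumes a: "a \<in> carrier R" "a \<noteq> \<zero>"
  shows "eval (geometric_sum (poly_ring R) X [a] (Suc n)) a = add_pow R (Suc n) \<one> \<otimes> a [^] n"
proof -
  interpret ev: ring_hom_cring "poly_ring R" R "\<lambda>p. eval p a"
    using eval_cring_hom[OF carrier_is_subring a(1)] .
  have "[a] \<in> carrier (poly_ring R)"
    using a by (simp add: univ_poly_carrier[symmetric] polynomial_def)
  then have "eval (geometric_sum (poly_ring R) X [a] m) a = geometric_sum R a a m" for m
    using ev.hom_geometric_sum[OF var_closed(1)[OF carrier_is_subring]] eval_var[OF a(1)] a(1) by simp
  also have "geometric_sum R a a (Suc n) = add_pow R (Suc n) (a [^] n)"
    by (rule geometric_sum_diagonal[OF a(1)])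
  also have "\<dots> = add_pow R (Suc n) \<one> \<otimes> a [^] n"
    using add_pow_ldistr[of \<one> "a [^] n" "Suc n"] a(1) by simp
  finally show ?thesis .
qed

text \<open>If N is invertible in R, then X^N - 1 has no multiple roots: a double root a would
  be a root of the geometric sum, whose value at a is N a^(N-1).\<close>

lemma (in domain) alg_mult_unity_poly_le_1:
  assumes a: "a \<in> carrier R" and N: "add_pow R N \<one> \<noteq> \<zero>"
  shows "alg_mult (unity_poly R N) a \<le> 1"
proof (rule ccontr)
  interpret P: domain "poly_ring R"
    using univ_poly_is_domain[OF carrier_is_subring] .
  interpret ev: ring_hom_cring "poly_ring R" R "\<lambda>p. eval p a"
    using eval_cring_hom[OF carrier_is_subring a] .
  let ?f = "unity_poly R N" and ?d = "[\<one>, \<ominus> a]" and ?g = "geometric_sum (poly_ring R) X [a] N"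
  assume "\<not> alg_mult ?f a \<le> 1"
  then have mult2: "2 \<le> alg_mult ?f a"
    by simp
  then have "is_root ?f a"
    using alg_mult_gt_zero_iff_is_root[OF unity_poly_closed, of N a] by linarith
  then have aN: "a [^] N = \<one>"
    using eval_unity_poly[OF a] a by (auto simp: is_root_def r_right_minus_eq)
  obtain M where NM: "N = Suc M"
    using N by (cases N) auto
  have X: "X \<in> carrier (poly_ring R)"
    using var_closed(1)[OF carrier_is_subring] .
  have c: "[a] \<in> carrier (poly_ring R)"
    using a aN NM by (auto simp: univ_poly_carrier[symmetric] polynomial_def)
  have d: "?d \<in> carrier (poly_ring R)" and d0: "?d \<noteq> \<zero>\<^bsub>poly_ring R\<^esub>"
    using a by (auto simp: univ_poly_carrier[symmetric] polynomial_def univ_poly_zero)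
  have g: "?g \<in> carrier (poly_ring R)"
    using P.geometric_sum_closed[OF X c] .
  obtain h where h: "h \<in> carrier (poly_ring R)" and fh: "?f = ?d [^]\<^bsub>poly_ring R\<^esub> (2::nat) \<otimes>\<^bsub>poly_ring R\<^esub> h"
    using le_alg_mult_imp_pdivides[OF a unity_poly_closed mult2] unfolding pdivides_def factor_def by auto
  have "?d \<otimes>\<^bsub>poly_ring R\<^esub> ?g = ?d \<otimes>\<^bsub>poly_ring R\<^esub> (?d \<otimes>\<^bsub>poly_ring R\<^esub> h)"
    using unity_poly_factor[OF a aN] NM fh d h by (simp add: numeral_2_eq_2 P.m_assoc)
  then have "?g = ?d \<otimes>\<^bsub>poly_ring R\<^esub> h"
    using P.m_lcancel[OF d0 d g] d h by simp
  moreover have "eval ?d a = \<zero>"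
    using a by (simp add: r_neg)
  ultimately have "eval ?g a = \<zero>"
    using d h by simp
  moreover have a0: "a \<noteq> \<zero>"
    using aN NM by auto
  ultimately have "add_pow R N \<one> \<otimes> a [^] M = \<zero>"
    unfolding NM eval_geometric_sum_var_const[OF a a0] by simp
  then show False
    using pow_nonzero[OF a a0, of M] N a by (simp add: integral_iff)
qed

lemma (in algebraically_closed) card_roots_of_unity:
  assumes N: "add_pow L N \<one> \<noteq> \<zero>"
  shows "finite (roots_of_unity L N)" and "card (roots_of_unity L N) = N"
proof -
  let ?f = "unity_poly L N"
  have N0: "N > 0"
    using N by (cases N) auto
  have set_roots: "set_mset (roots ?f) = roots_of_unity L N"
    using roots_mem_iff_is_root[OF unity_poly_closed] eval_unity_poly degree_unity_poly[OF N0] N0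
    by (auto simp: is_root_def roots_of_unity_def r_right_minus_eq)
  have "roots ?f = mset_set (set_mset (roots ?f))"
  proof (rule multiset_eqI)
    fix x
    have "count (roots ?f) x \<le> 1"
      using alg_mult_unity_poly_le_1[OF _ N] alg_mult_eq_count_roots[OF unity_poly_closed]
        roots_mem_iff_is_root[OF unity_poly_closed, of x]
      by (metis count_eq_zero_iff is_root_def zero_le)
    then show "count (roots ?f) x = count (mset_set (set_mset (roots ?f))) x"
      by (cases "x \<in># roots ?f") (auto simp: le_Suc_eq simp flip: not_in_iff)
  qed
  then have "card (set_mset (roots ?f)) = size (roots ?f)"
    by (metis size_mset_set)
  also have "\<dots> = N"
    using roots_over_carrier[OF unity_poly_closed] degree_unity_poly[OF N0] by (simp add: splitted_def)
  finally show "card (roots_of_unity L N) = N"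
    using set_roots by simp
  show "finite (roots_of_unity L N)"
    using set_roots by (metis finite_set_mset)
qed

lemma (in algebraically_closed) card_frobenius_fixed_points:
  assumes p: "Factorial_Ring.prime (p::nat)" and char: "add_pow L p \<one> = \<zero>" and e: "e > 0"
  shows "finite {x \<in> carrier L. x [^] (p ^ e) = x}" and "card {x \<in> carrier L. x [^] (p ^ e) = x} = p ^ e"
proof -
  have "p ^ e > 0"
    using prime_gt_0_nat[OF p] by simp
  then obtain n where n: "p ^ e = Suc n"
    using gr0_implies_Suc by blast
  have "p dvd p ^ e"
    using e by (simp add: dvd_power)
  then have char_q: "add_pow L (Suc n) \<one> = \<zero>"
    unfolding n by (rule add_pow_one_eq_zero_dvd[OF char])
  then have n_inv: "add_pow L n \<one> \<noteq> \<zero>"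
    by (rule add_pow_one_ne_zero_dvd_pred) simp
  then have n0: "n > 0"
    by (cases n) auto
  have "{x \<in> carrier L. x [^] (p ^ e) = x} = insert \<zero> (roots_of_unity L n)"
    unfolding n by (rule pow_Suc_fixed_points_eq)
  then show "finite {x \<in> carrier L. x [^] (p ^ e) = x}" "card {x \<in> carrier L. x [^] (p ^ e) = x} = p ^ e"
    using card_roots_of_unity[OF n_inv] zero_notin_roots_of_unity[OF n0] n by simp_all
qed

section \<open>Cosets of roots of unity as Heffter systems\<close>

definition pow_fiber :: "('a, 'b) monoid_scheme \<Rightarrow> nat \<Rightarrow> 'a \<Rightarrow> 'a set" where
  "pow_fiber R k x = {z \<in> carrier R. z [^]\<^bsub>R\<^esub> k = x [^]\<^bsub>R\<^esub> k}"

lemma pow_fiber_eq: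
  assumes "z \<in> pow_fiber R k x"
  shows "pow_fiber R k z = pow_fiber R k x"
  using assms by (simp add: pow_fiber_def)

lemma (in field) pow_fiber_eq_image:
  assumes x: "x \<in> carrier R" "x \<noteq> \<zero>"
  shows "pow_fiber R k x = (\<otimes>) x ` roots_of_unity R k"
proof (intro Set.set_eqI iffI)
  fix z assume z: "z \<in> pow_fiber R k x"
  have xU: "x \<in> Units R"
    using x field_Units by blast
  define y where "y = inv x \<otimes> z"
  have zc: "z \<in> carrier R" and zk: "z [^] k = x [^] k"
    using z by (auto simp: pow_fiber_def)
  have yc: "y \<in> carrier R"
    using xU zc by (simp add: y_def)
  have xy: "x \<otimes> y = z"
    using xU zc by (simp add: y_def m_assoc[symmetric] Units_closed)
  have "y [^] k = inv x [^] k \<otimes> x [^] k"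
    using xU zc zk by (simp add: y_def nat_pow_distrib)
  also have "\<dots> = (inv x \<otimes> x) [^] k"
    using xU by (intro nat_pow_distrib[symmetric]) auto
  also have "\<dots> = \<one>"
    using xU by simp
  finally show "z \<in> (\<otimes>) x ` roots_of_unity R k"
    using xy yc by (auto simp: roots_of_unity_def)
next
  fix z assume "z \<in> (\<otimes>) x ` roots_of_unity R k"
  then show "z \<in> pow_fiber R k x"
    using x by (auto simp: roots_of_unity_def pow_fiber_def nat_pow_distrib)
qed

lemma (in field) pow_fiber_finite_card:
  assumes x: "x \<in> carrier R" "x \<noteq> \<zero>" and fin: "finite (roots_of_unity R k)"
  shows "finite (pow_fiber R k x)" and "card (pow_fiber R k x) = card (roots_of_unity R k)"
proof -
  have "inj_on ((\<otimes>) x) (roots_of_unity R k)"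
    using inj_on_subset[OF inj_on_mult_left[OF x] roots_of_unity_subset] .
  then show "finite (pow_fiber R k x)" and "card (pow_fiber R k x) = card (roots_of_unity R k)"
    using fin by (simp_all add: pow_fiber_eq_image[OF x] card_image)
qed

lemma (in field) sum_pow_fiber_eq_zero:
  assumes x: "x \<in> carrier R" "x \<noteq> \<zero>" and k: "k > 0"
    and fin: "finite (roots_of_unity R k)" and card: "2 \<le> card (roots_of_unity R k)"
  shows "(\<Oplus>z\<in>pow_fiber R k x. z) = \<zero>"
proof -
  have inj: "inj_on ((\<otimes>) x) (roots_of_unity R k)"
    using inj_on_subset[OF inj_on_mult_left[OF x] roots_of_unity_subset] .
  have "(\<Oplus>z\<in>pow_fiber R k x. z) = (\<Oplus>y\<in>roots_of_unity R k. x \<otimes> y)"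
    unfolding pow_fiber_eq_image[OF x] using inj x roots_of_unity_subset[of R k]
    by (subst finsum_reindex) auto
  also have "\<dots> = x \<otimes> (\<Oplus>y\<in>roots_of_unity R k. y)"
    using finsum_rdistr[OF fin x(1) id_funcset_roots_of_unity] by simp
  also have "\<dots> = \<zero>"
    using sum_roots_of_unity_eq_zero[OF k fin card] x by simp
  finally show ?thesis .
qed

lemma (in monoid) pow_fiber_subset_roots_of_unity:
  assumes x: "x \<in> roots_of_unity G K" and "k dvd K"
  shows "pow_fiber G k x \<subseteq> roots_of_unity G K"
proof
  fix z assume z: "z \<in> pow_fiber G k x"
  obtain m where m: "K = k * m"
    using assms(2) by (auto elim: dvdE)
  have zG: "z \<in> carrier G"
    using z by (simp add: pow_fiber_def)
  then have "z [^] K = (z [^] k) [^] m"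
    by (simp add: m nat_pow_pow)
  also have "\<dots> = (x [^] k) [^] m"
    using z by (simp add: pow_fiber_def)
  also have "\<dots> = \<one>"
    using x by (simp add: roots_of_unity_def m nat_pow_pow)
  finally show "z \<in> roots_of_unity G K"
    using z by (simp add: pow_fiber_def roots_of_unity_def)
qed

lemma (in domain) card_pow_fiber_Int_le_1:
  assumes cop: "coprime k k'" and k: "k > 0" and x: "x \<in> carrier R" "x \<noteq> \<zero>"
  shows "card (pow_fiber R k x \<inter> pow_fiber R k' y) \<le> 1"
proof -
  obtain a b where ab: "k * a = k' * b + 1"
    using bezout_nat[of k k'] k cop by auto
  have "z = w" if z: "z \<in> pow_fiber R k x \<inter> pow_fiber R k' y" and w: "w \<in> pow_fiber R k x \<inter> pow_fiber R k' y" for z w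
  proof -
    have zc: "z \<in> carrier R" and wc: "w \<in> carrier R" and zk: "z [^] k = w [^] k" and zk': "z [^] k' = w [^] k'"
      using z w by (auto simp: pow_fiber_def)
    have "x [^] k \<noteq> \<zero>"
      using pow_nonzero[OF x] .
    then have "z \<noteq> \<zero>"
      using z k by (auto simp: pow_fiber_def nat_pow_zero)
    then have z0: "z [^] (k' * b) \<noteq> \<zero>"
      using pow_nonzero[OF zc] by blast
    have "z [^] (k' * b) \<otimes> z = (z [^] k) [^] a"
      using zc by (simp add: nat_pow_pow ab)
    also have "\<dots> = (w [^] k) [^] a"
      by (simp only: zk)
    also have "\<dots> = w [^] (k' * b) \<otimes> w"
      using wc by (simp add: nat_pow_pow ab)
    also have "w [^] (k' * b) = z [^] (k' * b)"
      using zc wc zk' by (simp add: nat_pow_pow[symmetric])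
    finally show "z = w"
      using m_lcancel[OF z0] zc wc by simp
  qed
  then show ?thesis
    by (cases "finite (pow_fiber R k x \<inter> pow_fiber R k' y)") (auto simp: card_le_Suc0_iff_eq)
qed

lemma (in field) heffter_system_pow_fibers:
  assumes K: "K > 0" and k: "k dvd K" "2 \<le> k"
    and fin: "finite (roots_of_unity R k)" and card: "card (roots_of_unity R k) = k"
  shows "heffter_system (add_monoid R) (roots_of_unity R K) k (pow_fiber R k ` roots_of_unity R K)"
  unfolding heffter_system_def
proof (intro conjI ballI impI)
  have unit: "x \<in> carrier R" "x \<noteq> \<zero>" if "x \<in> roots_of_unity R K" for x
    using that zero_notin_roots_of_unity[OF K] by (auto simp: roots_of_unity_def)
  show "\<Union> (pow_fiber R k ` roots_of_unity R K) = roots_of_unity R K"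
    using pow_fiber_subset_roots_of_unity[OF _ k(1)] unit by (auto simp: pow_fiber_def)
next
  fix B assume "B \<in> pow_fiber R k ` roots_of_unity R K"
  then obtain x where x: "x \<in> roots_of_unity R K" and B: "B = pow_fiber R k x"
    by blast
  have x_unit: "x \<in> carrier R" "x \<noteq> \<zero>"
    using x zero_notin_roots_of_unity[OF K] by (auto simp: roots_of_unity_def)
  show "B \<noteq> {}"
    using x_unit by (auto simp: B pow_fiber_def)
  show "card B = k"
    using pow_fiber_finite_card[OF x_unit fin] card by (simp add: B)
  have "(\<Oplus>z\<in>B. z) = \<zero>"
    unfolding B using k card by (intro sum_pow_fiber_eq_zero[OF x_unit _ fin]) auto
  then show "finprod (add_monoid R) (\<lambda>x. x) B = \<one>\<^bsub>add_monoid R\<^esub>"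
    unfolding finsum_def by simp
next
  fix A B assume "A \<in> pow_fiber R k ` roots_of_unity R K" "B \<in> pow_fiber R k ` roots_of_unity R K" "A \<noteq> B"
  then obtain x y where A: "A = pow_fiber R k x" and B: "B = pow_fiber R k y" and AB: "A \<noteq> B"
    by blast
  show "A \<inter> B = {}"
  proof (rule ccontr)
    assume "A \<inter> B \<noteq> {}"
    then obtain z where "z \<in> pow_fiber R k x" "z \<in> pow_fiber R k y"
      unfolding A B by blast
    then show False
      using AB pow_fiber_eq[of z R k x] pow_fiber_eq[of z R k y] by (simp add: A B)
  qed
qed

lemma (in domain) orthogonal_pow_fibers:
  assumes "coprime k k'" and "k > 0" and K: "K > 0"
  shows "orthogonal_systems (pow_fiber R k ` roots_of_unity R K) (pow_fiber R k' ` roots_of_unity R K)"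
  unfolding orthogonal_systems_def
proof (intro ballI)
  fix A B assume "A \<in> pow_fiber R k ` roots_of_unity R K" "B \<in> pow_fiber R k' ` roots_of_unity R K"
  then obtain x y where x: "x \<in> roots_of_unity R K" and "A = pow_fiber R k x" "B = pow_fiber R k' y"
    by blast
  moreover have "x \<in> carrier R" "x \<noteq> \<zero>"
    using x zero_notin_roots_of_unity[OF K] by (auto simp: roots_of_unity_def)
  ultimately show "card (A \<inter> B) \<le> 1"
    using card_pow_fiber_Int_le_1 assms(1,2) by simp
qed

section \<open>Changing the underlying group\<close>

lemma hom_finprod:
  assumes G: "comm_group G" and H: "comm_group H" and h: "h \<in> hom G H"
    and f: "f \<in> A \<rightarrow> carrier G"
  shows "h (finprod G f A) = finprod H (\<lambda>x. h (f x)) A"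
proof -
  interpret G: comm_group G by (rule G)
  interpret H: comm_group H by (rule H)
  interpret group_hom G H h
    using h by unfold_locales
  show ?thesis
  proof (cases "finite A")
    case True
    then show ?thesis
      using f by (induction A rule: finite_induct) (auto simp: G.finprod_insert H.finprod_insert Pi_def)
  qed simp
qed

lemma (in comm_group) obtain_iso_nat_group:
  assumes "finite (carrier G)"
  obtains H :: "nat monoid" and \<phi> where "comm_group H" and "\<phi> \<in> iso G H"
proof -
  obtain f :: "'a \<Rightarrow> nat" where f: "bij_betw f (carrier G) {0..<card (carrier G)}"
    using ex_bij_betw_finite_nat[OF assms] by blast
  define g where "g = inv_into (carrier G) f"
  define H where "H = \<lparr>carrier = f ` carrier G, monoid.mult = (\<lambda>a b. f (g a \<otimes> g b)), one = f \<one>\<rparr>"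
  have g_f: "g (f x) = x" if "x \<in> carrier G" for x
    unfolding g_def using f that by (simp add: bij_betw_inv_into_left)
  have hom: "f \<in> hom G H"
    unfolding H_def by (rule homI) (simp_all add: g_f)
  have "group H"
    using hom_imp_img_group[OF hom] by (simp add: H_def)
  moreover have "x \<otimes>\<^bsub>H\<^esub> y = y \<otimes>\<^bsub>H\<^esub> x" if "x \<in> carrier H" "y \<in> carrier H" for x y
    using that unfolding H_def by (auto simp: g_f m_comm)
  ultimately have "comm_group H"
    by (intro group.group_comm_groupI)
  moreover have "f \<in> iso G H"
    using hom f unfolding H_def by (auto intro!: isoI simp: bij_betw_def)
  ultimately show ?thesis
    using that by blast
qed

lemma half_set_iso:
  assumes G: "group G" and H: "group H" and \<phi>: "\<phi> \<in> iso G H" and V: "half_set G V"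
  shows "half_set H (\<phi> ` V)"
proof -
  interpret G: group G by (rule G)
  interpret H: group H by (rule H)
  interpret group_hom G H \<phi>
    using \<phi> by unfold_locales (simp add: iso_def)
  have inj: "inj_on \<phi> (carrier G)" and surj: "\<phi> ` carrier G = carrier H"
    using \<phi> by (auto simp: iso_def bij_betw_def)
  have VG: "V \<subseteq> carrier G - {\<one>\<^bsub>G\<^esub>}"
    using V by (simp add: half_set_def)
  have mem: "\<phi> g \<in> \<phi> ` V \<longleftrightarrow> g \<in> V" if "g \<in> carrier G" for g
    using inj_on_image_mem_iff[OF inj that, of V] VG by auto
  have one: "\<phi> g = \<one>\<^bsub>H\<^esub> \<longleftrightarrow> g = \<one>\<^bsub>G\<^esub>" if "g \<in> carrier G" for g
    using inj_on_eq_iff[OF inj that G.one_closed] by simp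
  show ?thesis
    unfolding half_set_def
  proof (intro conjI ballI)
    show "\<phi> ` V \<subseteq> carrier H - {\<one>\<^bsub>H\<^esub>}"
      using VG one by auto
  next
    fix h assume h: "h \<in> carrier H - {\<one>\<^bsub>H\<^esub>}"
    then obtain g where g: "g \<in> carrier G" "h = \<phi> g"
      using surj by (metis DiffD1 imageE)
    then have "g \<in> V \<longleftrightarrow> inv\<^bsub>G\<^esub> g \<notin> V"
      using V h one unfolding half_set_def by blast
    moreover have "inv\<^bsub>H\<^esub> h \<in> \<phi> ` V \<longleftrightarrow> inv\<^bsub>G\<^esub> g \<in> V"
      using g mem[OF G.inv_closed[OF g(1)]] by simp
    moreover have "h \<in> \<phi> ` V \<longleftrightarrow> g \<in> V"
      using mem[OF g(1)] g(2) by simp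
    ultimately show "h \<in> \<phi> ` V \<longleftrightarrow> inv\<^bsub>H\<^esub> h \<notin> \<phi> ` V"
      by blast
  qed
qed

lemma heffter_system_iso:
  assumes G: "comm_group G" and H: "comm_group H" and \<phi>: "\<phi> \<in> iso G H"
    and V: "V \<subseteq> carrier G" and P: "heffter_system G V k P"
  shows "heffter_system H (\<phi> ` V) k ((`) \<phi> ` P)"
proof -
  interpret G: comm_group G by (rule G)
  interpret H: comm_group H by (rule H)
  interpret group_hom G H \<phi>
    using \<phi> by unfold_locales (simp add: iso_def)
  have inj: "inj_on \<phi> V"
    using \<phi> V by (auto simp: iso_def bij_betw_def intro: inj_on_subset)
  have hom: "\<phi> \<in> hom G H"
    using \<phi> by (simp add: iso_def)
  have BV: "B \<subseteq> V" if "B \<in> P" for B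
    using P that by (auto simp: heffter_system_def)
  show ?thesis
    unfolding heffter_system_def
  proof (intro conjI ballI impI)
    show "\<Union> ((`) \<phi> ` P) = \<phi> ` V"
      using P by (auto simp: heffter_system_def)
  next
    fix B' assume "B' \<in> (`) \<phi> ` P"
    then obtain B where B: "B \<in> P" and B': "B' = \<phi> ` B"
      by auto
    have injB: "inj_on \<phi> B"
      using inj BV[OF B] by (rule inj_on_subset)
    have BG: "B \<subseteq> carrier G"
      using BV[OF B] V by auto
    show "B' \<noteq> {}" and "card B' = k"
      using P B injB by (auto simp: B' heffter_system_def card_image)
    have "finprod H (\<lambda>x. x) B' = finprod H \<phi> B"
      unfolding B' using injB BG by (subst H.finprod_reindex) auto
    also have "\<dots> = \<phi> (finprod G (\<lambda>x. x) B)"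
      by (rule hom_finprod[OF G H hom, symmetric]) (use BG in auto)
    also have "\<dots> = \<one>\<^bsub>H\<^esub>"
      using P B by (simp add: heffter_system_def)
    finally show "finprod H (\<lambda>x. x) B' = \<one>\<^bsub>H\<^esub>" .
  next
    fix A' B' assume "A' \<in> (`) \<phi> ` P" "B' \<in> (`) \<phi> ` P" "A' \<noteq> B'"
    then obtain A B where "A \<in> P" "B \<in> P" "A \<noteq> B" "A' = \<phi> ` A" "B' = \<phi> ` B"
      by auto
    then show "A' \<inter> B' = {}"
      using P inj BV by (auto simp: heffter_system_def simp flip: inj_on_image_Int)
  qed
qed

lemma orthogonal_systems_image:
  assumes "inj_on \<phi> (\<Union>P \<union> \<Union>Q)" and "orthogonal_systems P Q"
  shows "orthogonal_systems ((`) \<phi> ` P) ((`) \<phi> ` Q)"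
  unfolding orthogonal_systems_def
proof (intro ballI)
  fix A' B' assume "A' \<in> (`) \<phi> ` P" "B' \<in> (`) \<phi> ` Q"
  then obtain A B where AB: "A \<in> P" "B \<in> Q" and "A' = \<phi> ` A" "B' = \<phi> ` B"
    by auto
  moreover have "inj_on \<phi> (A \<union> B)"
    using assms(1) AB by (auto intro: inj_on_subset)
  ultimately have "card (A' \<inter> B') = card (A \<inter> B)"
    using inj_on_image_Int[of \<phi> "A \<union> B" A B] card_image[of \<phi> "A \<inter> B"]
      inj_on_subset[of \<phi> "A \<union> B" "A \<inter> B"] by auto
  then show "card (A' \<inter> B') \<le> 1"
    using assms(2) AB by (simp add: orthogonal_systems_def)
qed

lemma exists_MOHS_of_comm_group:
  fixes G :: "('a, 'b) monoid_scheme"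
  assumes G: "comm_group G" and fin: "finite (carrier G)" and ord: "order G = 2 * v + 1"
    and V: "half_set G V" and len: "length Ps = length ks"
    and heffter: "\<forall>i < length ks. heffter_system G V (ks ! i) (Ps ! i)"
    and orth: "\<forall>i < length ks. \<forall>j < length ks. i \<noteq> j \<longrightarrow> orthogonal_systems (Ps ! i) (Ps ! j)"
  shows "exists_MOHS v ks"
proof -
  interpret comm_group G by (rule G)
  obtain H :: "nat monoid" and \<phi> where H: "comm_group H" and \<phi>: "\<phi> \<in> iso G H"
    using obtain_iso_nat_group[OF fin] by blast
  have VG: "V \<subseteq> carrier G"
    using V by (auto simp: half_set_def)
  have inj: "inj_on \<phi> (carrier G)"
    using \<phi> by (simp add: iso_def bij_betw_def)
  have PV: "\<Union> (Ps ! i) \<subseteq> carrier G" if "i < length ks" for i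
    using heffter VG that by (auto simp: heffter_system_def)
  show ?thesis
    unfolding exists_MOHS_def
  proof (intro exI conjI allI impI)
    show "comm_group H" by (rule H)
    have "G \<cong> H"
      using \<phi> by (auto simp: is_iso_def)
    then show "finite (carrier H)" and "order H = 2 * v + 1"
      using fin ord iso_finite iso_same_card unfolding order_def by metis+
    show "half_set H (\<phi> ` V)"
      using half_set_iso[OF is_group comm_group.axioms(2)[OF H] \<phi> V] .
    show "length (map ((`) ((`) \<phi>)) Ps) = length ks"
      using len by simp
  next
    fix i assume i: "i < length ks"
    show "heffter_system H (\<phi> ` V) (ks ! i) (map ((`) ((`) \<phi>)) Ps ! i)"
      using heffter_system_iso[OF G H \<phi> VG] heffter i len by simp
  next
    fix i j assume "i < length ks" "j < length ks" "i \<noteq> j"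
    then show "orthogonal_systems (map ((`) ((`) \<phi>)) Ps ! i) (map ((`) ((`) \<phi>)) Ps ! j)"
      using orthogonal_systems_image[OF inj_on_subset[OF inj]] orth PV len by simp
  qed
qed

lemma subgroup_comm_group:
  assumes "comm_group A" and S: "subgroup S A"
  shows "comm_group (A\<lparr>carrier := S\<rparr>)"
proof -
  interpret comm_group A by fact
  show ?thesis
    using subgroup.subgroup_is_group[OF S is_group] subgroup.mem_carrier[OF S]
    by (auto intro: group.group_comm_groupI simp: m_comm)
qed

lemma heffter_system_subgroup:
  assumes A: "comm_group A" and S: "subgroup S A" and VS: "V \<subseteq> S"
    and P: "heffter_system A V k P"
  shows "heffter_system (A\<lparr>carrier := S\<rparr>) V k P"
proof -
  interpret comm_group A by (rule A)
  have AS: "comm_group (A\<lparr>carrier := S\<rparr>)"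
    using subgroup_comm_group[OF A S] .
  have incl: "(\<lambda>x. x) \<in> hom (A\<lparr>carrier := S\<rparr>) A"
    using subgroup.subset[OF S] by (auto simp: hom_def)
  have "finprod (A\<lparr>carrier := S\<rparr>) (\<lambda>x. x) B = finprod A (\<lambda>x. x) B" if "B \<in> P" for B
    using hom_finprod[OF AS A incl, of "\<lambda>x. x" B] P VS that by (auto simp: heffter_system_def)
  then show ?thesis
    using P by (simp add: heffter_system_def)
qed

lemma exists_MOHS_of_subgroup:
  fixes A :: "('a, 'b) monoid_scheme"
  assumes A: "comm_group A" and S: "subgroup S A" and fin: "finite S" and card: "card S = 2 * v + 1"
    and V: "V \<subseteq> S - {\<one>\<^bsub>A\<^esub>}" and half: "\<forall>g \<in> S - {\<one>\<^bsub>A\<^esub>}. g \<in> V \<longleftrightarrow> inv\<^bsub>A\<^esub> g \<notin> V"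
    and len: "length Ps = length ks"
    and heffter: "\<forall>i < length ks. heffter_system A V (ks ! i) (Ps ! i)"
    and orth: "\<forall>i < length ks. \<forall>j < length ks. i \<noteq> j \<longrightarrow> orthogonal_systems (Ps ! i) (Ps ! j)"
  shows "exists_MOHS v ks"
proof (rule exists_MOHS_of_comm_group[OF subgroup_comm_group[OF A S] _ _ _ len _ orth])
  interpret comm_group A by (rule A)
  show "finite (carrier (A\<lparr>carrier := S\<rparr>))" and "order (A\<lparr>carrier := S\<rparr>) = 2 * v + 1"
    using fin card by (simp_all add: order_def)
  show "half_set (A\<lparr>carrier := S\<rparr>) V"
    using V half m_inv_consistent[OF S] by (simp add: half_set_def)
  show "\<forall>i < length ks. heffter_system (A\<lparr>carrier := S\<rparr>) V (ks ! i) (Ps ! i)"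
    using heffter_system_subgroup[OF A S] V heffter by blast
qed

lemma (in algebraically_closed) exists_MOHS_prime_power:
  assumes p: "Factorial_Ring.prime (p::nat)" and char: "add_pow L p \<one> = \<zero>"
    and q: "2 * K + 1 = p ^ e" and K: "odd K"
    and ks: "\<forall>k \<in> set ks. k dvd K \<and> 2 \<le> k"
    and cop: "\<forall>i < length ks. \<forall>j < length ks. i \<noteq> j \<longrightarrow> coprime (ks ! i) (ks ! j)"
  shows "exists_MOHS K ks"
proof -
  let ?F = "{x \<in> carrier L. x [^] (p ^ e) = x}" and ?U = "roots_of_unity L"
  have K0: "K > 0" and e: "e > 0"
    using K q odd_pos by (auto intro: gr0I)
  have char_q: "add_pow L (Suc (2 * K)) \<one> = \<zero>"
    using add_pow_one_eq_zero_dvd[OF char] q e by (simp add: dvd_power)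
  have U: "finite (?U d) \<and> card (?U d) = d" if "d dvd 2 * K" for d
    using card_roots_of_unity add_pow_one_ne_zero_dvd_pred[OF char_q that] by blast
  have "p ^ e = Suc (2 * K)"
    using q by simp
  then have F: "?F = insert \<zero> (?U (2 * K))"
    by (simp only: pow_Suc_fixed_points_eq)
  show ?thesis
  proof (rule exists_MOHS_of_subgroup[OF a_comm_group frobenius_fixed_points_subgroup[OF p char]])
    show "finite ?F" and "card ?F = 2 * K + 1"
      using card_frobenius_fixed_points[OF p char e] q by simp_all
    show "?U K \<subseteq> ?F - {\<one>\<^bsub>add_monoid L\<^esub>}"
      using F roots_of_unity_subset_dvd[of K "2 * K"] zero_notin_roots_of_unity[OF K0] by auto
    show "\<forall>g \<in> ?F - {\<one>\<^bsub>add_monoid L\<^esub>}. g \<in> ?U K \<longleftrightarrow> inv\<^bsub>add_monoid L\<^esub> g \<notin> ?U K"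
      using roots_of_unity_neg_iff[OF K add_pow_one_ne_zero_dvd_pred[OF char_q dvd_triv_left]] F
      by (auto simp: a_inv_def[symmetric])
    show "length (map (\<lambda>k. pow_fiber L k ` ?U K) ks) = length ks"
      by simp
    show "\<forall>i < length ks. heffter_system (add_monoid L) (?U K) (ks ! i) (map (\<lambda>k. pow_fiber L k ` ?U K) ks ! i)"
      using heffter_system_pow_fibers[OF K0] U ks by (auto simp: nth_mem)
    show "\<forall>i < length ks. \<forall>j < length ks. i \<noteq> j \<longrightarrow>
        orthogonal_systems (map (\<lambda>k. pow_fiber L k ` ?U K) ks ! i) (map (\<lambda>k. pow_fiber L k ` ?U K) ks ! j)"
    proof (intro allI impI)
      fix i j assume ij: "i < length ks" "j < length ks" "i \<noteq> j"
      then have "0 < ks ! i"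
        using ks nth_mem[of i ks] by fastforce
      then show "orthogonal_systems (map (\<lambda>k. pow_fiber L k ` ?U K) ks ! i) (map (\<lambda>k. pow_fiber L k ` ?U K) ks ! j)"
        using orthogonal_pow_fibers[OF _ _ K0] cop ij by simp
    qed
  qed
qed

lemma (in residues) add_pow_one_eq_mod: "add_pow R (n::nat) \<one> = int n mod m"
proof (induction n)
  case 0
  then show ?case by (simp add: res_zero_eq)
next
  case (Suc n)
  have "add_pow R (Suc n) \<one> = (int n mod m + 1) mod m"
    using Suc by (simp add: add.nat_pow_Suc res_add_eq res_one_eq)
  also have "\<dots> = int (Suc n) mod m"
    by (simp add: mod_add_left_eq add.commute[of "int n" 1])
  finally show ?case .
qed

lemma alg_closure_residue_ring:
  assumes p: "Factorial_Ring.prime (p::nat)"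
  defines "L \<equiv> field.alg_closure (residue_ring (int p))"
  shows "algebraically_closed L" and "add_pow L p \<one>\<^bsub>L\<^esub> = \<zero>\<^bsub>L\<^esub>"
proof -
  interpret Zp: residues_prime p "residue_ring (int p)"
    using p by unfold_locales
  have closure: "algebraic_closure L (Zp.indexed_const ` carrier (residue_ring (int p)))"
    and hom: "Zp.indexed_const \<in> ring_hom (residue_ring (int p)) L"
    unfolding L_def using field.alg_closureE[OF Zp.is_field] by auto
  interpret L: algebraic_closure L "Zp.indexed_const ` carrier (residue_ring (int p))"
    by (rule closure)
  interpret h: ring_hom_ring "residue_ring (int p)" L Zp.indexed_const
    using hom by unfold_locales
  show "algebraically_closed L"
    by unfold_locales
  have "add_pow (residue_ring (int p)) p \<one>\<^bsub>residue_ring (int p)\<^esub> = \<zero>\<^bsub>residue_ring (int p)\<^esub>"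
    by (simp add: Zp.add_pow_one_eq_mod Zp.res_zero_eq)
  then show "add_pow L p \<one>\<^bsub>L\<^esub> = \<zero>\<^bsub>L\<^esub>"
    using group_hom.hom_nat_pow[OF h.a_group_hom, of "\<one>\<^bsub>residue_ring (int p)\<^esub>" p]
    by (simp add: add_pow_def)
qed

theorem theorem1p13:
  fixes ks :: "nat list"
  assumes "ks \<noteq> []"
    and "\<forall>i < length ks. odd (ks ! i) \<and> ks ! i \<ge> 3"
    and "\<forall>i < length ks. \<forall>j < length ks. i \<noteq> j \<longrightarrow> coprime (ks ! i) (ks ! j)"
    and "\<exists>p n. Factorial_Ring.prime (p::nat) \<and> n \<ge> 1 \<and> 2 * prod_list ks + 1 = p ^ n"
  shows "exists_MOHS ((2 * prod_list ks + 1 - 1) div 2) ks"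
proof -
  obtain p e where p: "Factorial_Ring.prime (p::nat)" and q: "2 * prod_list ks + 1 = p ^ e"
    using assms(4) by blast
  have odd_ks: "\<forall>k \<in> set ks. odd k \<and> 2 \<le> k"
    using assms(2) by (fastforce simp: in_set_conv_nth)
  then have "odd (prod_list ks)"
    by (induction ks) auto
  have ks: "\<forall>k \<in> set ks. k dvd prod_list ks \<and> 2 \<le> k"
    using odd_ks prod_list_dvd by blast
  interpret algebraically_closed "field.alg_closure (residue_ring (int p))"
    using alg_closure_residue_ring[OF p] by simp
  have "exists_MOHS (prod_list ks) ks"
    using exists_MOHS_prime_power[OF p _ q \<open>odd (prod_list ks)\<close> ks assms(3)] alg_closure_residue_ring[OF p] by simp
  then show ?thesis
    by simp
qed

end
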